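(* Let $i_N=(\pi_N,\varphi_N):\mathcal M(N,K)\to L^-\mathrm{GL}_K\times L^-\mathrm{GL}_1$. Then $\bigcup_N i_N(\mathcal M(N,K))$ is Zariski-dense in $L^-\mathrm{GL}_K\times L^-\mathrm{GL}_1$.
   Context: $\mathcal M(N,K)=\mathrm{Rep}(N,K)/\!/\mathrm{GL}_N$, $\mathrm{Rep}(N,K)$ being triples $(B,\psi,\overline\psi)$ with $B\in\mathrm{Mat}_{N\times N}(\mathbb C)$, $\psi\in\mathrm{Mat}_{N\times K}$, $\overline\psi\in\mathrm{Mat}_{K\times N}$, and $g\cdot(B,\psi,\overline\psi)=(gBg^{-1},g\psi,\overline\psi g^{-1})$. $\widetilde B=B+\psi\overline\psi$. $L^-\mathrm{GL}_K$ is the group scheme of power series $1+\sum_{i\ge1}g_iz^{-i}$, $g_i\in\mathfrak{gl}_K$ (an infinite-dimensional affine space), similarly $L^-\mathrm{GL}_1$ for $K=1$. $\pi_N(B,\psi,\overline\psi)=1+\overline\psi(z-\widetilde B/2)^{-1}\psi$ (expanded in $z^{-1}$), and $\varphi_N(B,\psi,\overline\psi)=z^{-N}\det(z-\widetilde B)$. The maps $i_N$ are closed embeddings compatible with the embeddings $\mathcal M(N,K)\to\mathcal M(N',K)$, $(B,\psi,\overline\psi)\mapsto(\mathrm{diag}(B,0),\binom{\psi}{0},(\overline\psi\ 0))$ for $N<N'$. *)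

theory Defs
  imports Complex_Main "Jordan_Normal_Form.Char_Poly"
begin

text \<open>Coordinates of the infinite-dimensional affine space L^-GL_K x L^-GL_1:
  GC i a b is the (a,b) entry of g_i (coefficient of z^(-i)), i >= 1, a,b < K;
  HC i is the coefficient of z^(-i) of the scalar series, i >= 1.\<close>
datatype coord = GC nat nat nat | HC nat

definition coords :: "nat \<Rightarrow> coord set" where
  "coords K = {GC i a b | i a b. 1 \<le> i \<and> a < K \<and> b < K} \<union> {HC i | i. 1 \<le> i}"

definition loop_space :: "nat \<Rightarrow> (coord \<Rightarrow> complex) set" where
  "loop_space K = {p. \<forall>v. v \<notin> coords K \<longrightarrow> p v = 0}"

inductive_set poly_fun :: "coord set \<Rightarrow> ((coord \<Rightarrow> complex) \<Rightarrow> complex) set"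
  for V :: "coord set" where
  pconst: "(\<lambda>p. c) \<in> poly_fun V"
| pvar: "v \<in> V \<Longrightarrow> (\<lambda>p. p v) \<in> poly_fun V"
| padd: "f \<in> poly_fun V \<Longrightarrow> g \<in> poly_fun V \<Longrightarrow> (\<lambda>p. f p + g p) \<in> poly_fun V"
| pmult: "f \<in> poly_fun V \<Longrightarrow> g \<in> poly_fun V \<Longrightarrow> (\<lambda>p. f p * g p) \<in> poly_fun V"

definition zariski_dense :: "nat \<Rightarrow> (coord \<Rightarrow> complex) set \<Rightarrow> bool" where
  "zariski_dense K S \<longleftrightarrow> S \<subseteq> loop_space K \<and>
     (\<forall>f \<in> poly_fun (coords K). (\<forall>p\<in>S. f p = 0) \<longrightarrow> (\<forall>p\<in>loop_space K. f p = 0))"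

definition Rep :: "nat \<Rightarrow> nat \<Rightarrow> (complex mat \<times> complex mat \<times> complex mat) set" where
  "Rep N K = {(B, psi, psib). B \<in> carrier_mat N N \<and> psi \<in> carrier_mat N K \<and> psib \<in> carrier_mat K N}"

definition Btilde :: "complex mat \<Rightarrow> complex mat \<Rightarrow> complex mat \<Rightarrow> complex mat" where
  "Btilde B psi psib = B + psi * psib"

text \<open>pi_N = 1 + psib (z - Bt/2)^(-1) psi = 1 + sum_{i>=1} psib (Bt/2)^(i-1) psi z^(-i);
  phi_N = z^(-N) det(z - Bt) = sum_{i=0}^N (coeff of z^(N-i) in charpoly Bt) z^(-i).
  i_map K N gives the coordinates of i_N(B,psi,psib).\<close>
definition i_map :: "nat \<Rightarrow> nat \<Rightarrow> complex mat \<Rightarrow> complex mat \<Rightarrow> complex mat \<Rightarrow> coord \<Rightarrow> complex" where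
  "i_map K N B psi psib v = (case v of
     GC i a b \<Rightarrow> (if 1 \<le> i \<and> a < K \<and> b < K then
        (psib * (((1/2) ^ (i - 1)) \<cdot>\<^sub>m (Btilde B psi psib ^\<^sub>m (i - 1))) * psi) $$ (a, b) else 0)
   | HC i \<Rightarrow> (if 1 \<le> i \<and> i \<le> N then coeff (char_poly (Btilde B psi psib)) (N - i) else 0))"

end

theory Submission imports Defs begin

text \<open>A regular function depends on finitely many coordinates, so it suffices to show that
  every truncation (g_1, ..., g_M; h_1, ..., h_M) of a point of the loop space is attained by
  some i_N. Take N = KM + M and let Btilde be twice the shift by K on the first KM coordinates,
  followed by the diagonal block diag(a_1, ..., a_M), where the a_j are the roots of
  z^M + h_1 z^(M-1) + ... + h_M. With psib = (I_K 0) and psi the column of blocks g_1, ..., g_M,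
  the product psib (Btilde/2)^k psi reads off the block g_(k+1), while
  det(z - Btilde) = z^(KM) (z - a_1) ... (z - a_M) has the prescribed coefficients h_i.
  Finally B = Btilde - psi psib.\<close>

lemma sum_single_support:
  assumes "finite S" "\<And>j. j \<in> S \<Longrightarrow> j \<noteq> i \<Longrightarrow> f j = 0"
  shows "sum f S = (if i \<in> S then f i else 0)"
  using assms by (cases "i \<in> S") (auto simp: sum.remove[of S i] intro!: sum.neutral)

definition depends_only_on :: "'a set \<Rightarrow> (('a \<Rightarrow> 'b) \<Rightarrow> 'c) \<Rightarrow> bool" where
  "depends_only_on F f \<longleftrightarrow> (\<forall>p q. (\<forall>v\<in>F. p v = q v) \<longrightarrow> f p = f q)"

lemma depends_only_on_mono: "depends_only_on F f \<Longrightarrow> F \<subseteq> G \<Longrightarrow> depends_only_on G f"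
  unfolding depends_only_on_def by (meson subsetD)

lemma depends_only_on_binop:
  "depends_only_on F f \<Longrightarrow> depends_only_on F g \<Longrightarrow> depends_only_on F (\<lambda>p. h (f p) (g p))"
  unfolding depends_only_on_def by metis

lemma poly_fun_finite_support:
  assumes "f \<in> poly_fun V"
  obtains F where "finite F" "F \<subseteq> V" "depends_only_on F f"
proof -
  have "\<exists>F. finite F \<and> F \<subseteq> V \<and> depends_only_on F f"
    using assms
  proof (induction rule: poly_fun.induct)
    case (pconst c)
    show ?case by (auto simp: depends_only_on_def)
  next
    case (pvar v)
    then show ?case by (intro exI[of _ "{v}"]) (auto simp: depends_only_on_def)
  next
    case (padd f g)
    then obtain F G where "finite F" "F \<subseteq> V" "depends_only_on F f" "finite G" "G \<subseteq> V" "depends_only_on G g"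
      by blast
    then show ?case
      by (intro exI[of _ "F \<union> G"]) (auto intro: depends_only_on_binop depends_only_on_mono)
  next
    case (pmult f g)
    then obtain F G where "finite F" "F \<subseteq> V" "depends_only_on F f" "finite G" "G \<subseteq> V" "depends_only_on G g"
      by blast
    then show ?case
      by (intro exI[of _ "F \<union> G"]) (auto intro: depends_only_on_binop depends_only_on_mono)
  qed
  with that show ?thesis by blast
qed

lemma zariski_dense_if_interpolating:
  assumes "S \<subseteq> loop_space K"
    and "\<And>F p. finite F \<Longrightarrow> p \<in> loop_space K \<Longrightarrow> \<exists>q\<in>S. \<forall>v\<in>F. q v = p v"
  shows "zariski_dense K S"
  unfolding zariski_dense_def
proof (intro conjI ballI impI assms(1))
  fix f p
  assume f: "f \<in> poly_fun (coords K)" and vanish: "\<forall>q\<in>S. f q = 0" and p: "p \<in> loop_space K"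
  obtain F where "finite F" and support: "depends_only_on F f"
    using poly_fun_finite_support[OF f] by blast
  then obtain q where "q \<in> S" "\<forall>v\<in>F. q v = p v" using assms(2) p by blast
  then have "f p = f q" using support by (simp add: depends_only_on_def)
  with \<open>q \<in> S\<close> vanish show "f p = 0" by simp
qed

lemma split_monic_poly_with_lower_coeffs:
  fixes c :: "nat \<Rightarrow> complex"
  obtains as where "length as = M" "\<And>j. j < M \<Longrightarrow> coeff (\<Prod>a\<leftarrow>as. [:- a, 1:]) j = c j"
proof -
  define q where "q = monom 1 M + (\<Sum>j<M. monom (c j) j)"
  have coeff_q: "coeff q j = (if j = M then 1 else 0) + (if j < M then c j else 0)" for j
    by (simp add: q_def coeff_sum coeff_monom)
  have "degree q = M"
    by (intro antisym degree_le le_degree) (auto simp: coeff_q)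
  moreover obtain as where "Polynomial.smult (coeff q (degree q)) (\<Prod>a\<leftarrow>as. [:- a, 1:]) = q" "length as = degree q"
    using fundamental_theorem_algebra_factorized by blast
  ultimately show ?thesis
    using that[of as] by (simp add: coeff_q)
qed

definition shift_block_mat :: "nat \<Rightarrow> nat \<Rightarrow> nat \<Rightarrow> complex list \<Rightarrow> complex mat" where
  "shift_block_mat N K L as = mat N N (\<lambda>(r, c).
     if r < L then (if c = r + K \<and> c < L then 2 else 0)
     else if c = r then as ! (r - L) else 0)"

lemma shift_block_mat_carrier [simp]: "shift_block_mat N K L as \<in> carrier_mat N N"
  by (simp add: shift_block_mat_def)

lemma shift_block_mat_pow_index:
  assumes "L \<le> N" "r < L" "c < N"
  shows "(shift_block_mat N K L as ^\<^sub>m k) $$ (r, c) = (if c = r + k * K \<and> c < L then 2 ^ k else 0)"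
  using assms(3)
proof (induction k arbitrary: c)
  case 0
  then show ?case using assms by (simp add: shift_block_mat_def)
next
  case (Suc k)
  let ?A = "shift_block_mat N K L as"
  have "(?A ^\<^sub>m Suc k) $$ (r, c) = (\<Sum>j\<in>{..<N}. (?A ^\<^sub>m k) $$ (r, j) * ?A $$ (j, c))"
    using Suc.prems assms by (simp add: index_mult_mat scalar_prod_def lessThan_atLeast0
        carrier_matD[OF shift_block_mat_carrier])
  also have "\<dots> = (if r + k * K < L then 2 ^ k * ?A $$ (r + k * K, c) else 0)"
    by (subst sum_single_support[where i = "r + k * K"]) (use Suc.IH assms in auto)
  also have "\<dots> = (if c = r + Suc k * K \<and> c < L then 2 ^ Suc k else 0)"
    using Suc.prems assms by (auto simp: shift_block_mat_def)
  finally show ?case .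
qed

lemma char_poly_shift_block_mat:
  assumes "K * M + length as = N"
  shows "char_poly (shift_block_mat N K (K * M) as) = monom 1 (K * M) * (\<Prod>a\<leftarrow>as. [:- a, 1:])"
proof -
  let ?A = "shift_block_mat N K (K * M) as"
  have "upper_triangular ?A"
    unfolding upper_triangular_def shift_block_mat_def by auto
  moreover have "diag_mat ?A = replicate (K * M) 0 @ as"
    using assms by (intro nth_equalityI) (auto simp: diag_mat_def shift_block_mat_def nth_append)
  ultimately show ?thesis
    by (simp add: char_poly_upper_triangular[OF shift_block_mat_carrier] monom_altdef)
qed

definition block_column_mat :: "nat \<Rightarrow> nat \<Rightarrow> nat \<Rightarrow> (coord \<Rightarrow> complex) \<Rightarrow> complex mat" where
  "block_column_mat N K L p = mat N K (\<lambda>(s, b). if s < L then p (GC (s div K + 1) (s mod K) b) else 0)"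

definition first_rows_mat :: "nat \<Rightarrow> nat \<Rightarrow> complex mat" where
  "first_rows_mat K N = mat K N (\<lambda>(a, r). if r = a then 1 else 0)"

lemma first_rows_mat_carrier [simp]: "first_rows_mat K N \<in> carrier_mat K N"
  by (simp add: first_rows_mat_def)

lemma block_column_mat_carrier [simp]: "block_column_mat N K L p \<in> carrier_mat N K"
  by (simp add: block_column_mat_def)

lemma first_rows_mat_mult_index:
  assumes "X \<in> carrier_mat N n" "a < K" "K \<le> N" "s < n"
  shows "(first_rows_mat K N * X) $$ (a, s) = X $$ (a, s)"
proof -
  have "(first_rows_mat K N * X) $$ (a, s) = (\<Sum>r\<in>{..<N}. first_rows_mat K N $$ (a, r) * X $$ (r, s))"
    using assms by (simp add: index_mult_mat scalar_prod_def first_rows_mat_def lessThan_atLeast0)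
  also have "\<dots> = X $$ (a, s)"
    by (subst sum_single_support[where i = a]) (use assms in \<open>auto simp: first_rows_mat_def\<close>)
  finally show ?thesis .
qed

lemma block_column_mat_read_off:
  assumes "a < K" "b < K" "(k + 1) * K \<le> L" "L \<le> N"
  shows "(first_rows_mat K N * (((1/2) ^ k) \<cdot>\<^sub>m (shift_block_mat N K L as ^\<^sub>m k))
           * block_column_mat N K L p) $$ (a, b) = p (GC (k + 1) a b)"
proof -
  let ?Y = "((1/2) ^ k) \<cdot>\<^sub>m (shift_block_mat N K L as ^\<^sub>m k)"
  let ?P = "block_column_mat N K L p"
  have lt: "a + k * K < L" using assms by (simp add: add.commute)
  have Y: "(first_rows_mat K N * ?Y) $$ (a, s) = (if s = a + k * K then 1 else 0)" if "s < N" for s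
  proof -
    have "(first_rows_mat K N * ?Y) $$ (a, s) = ?Y $$ (a, s)"
      by (rule first_rows_mat_mult_index) (use assms that lt in auto)
    then show ?thesis
      using assms lt that by (simp add: shift_block_mat_pow_index power_mult_distrib[symmetric]
          carrier_matD[OF shift_block_mat_carrier])
  qed
  have "(first_rows_mat K N * ?Y * ?P) $$ (a, b)
      = (\<Sum>s\<in>{..<N}. (first_rows_mat K N * ?Y) $$ (a, s) * ?P $$ (s, b))"
    using assms by (simp add: index_mult_mat scalar_prod_def lessThan_atLeast0
        carrier_matD[OF shift_block_mat_carrier] carrier_matD[OF first_rows_mat_carrier]
        carrier_matD[OF block_column_mat_carrier])
  also have "\<dots> = ?P $$ (a + k * K, b)"
    using lt assms by (subst sum_single_support[where i = "a + k * K"]) (auto simp: Y)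
  also have "\<dots> = p (GC (k + 1) a b)"
    using lt assms by (simp add: block_column_mat_def)
  finally show ?thesis .
qed

lemma Rep_from_Btilde:
  assumes "Bt \<in> carrier_mat N N" "psi \<in> carrier_mat N K" "psib \<in> carrier_mat K N"
  shows "(Bt - psi * psib, psi, psib) \<in> Rep N K" "Btilde (Bt - psi * psib) psi psib = Bt"
  using assms by (auto simp: Rep_def Btilde_def)

fun coord_degree :: "coord \<Rightarrow> nat" where
  "coord_degree (GC i a b) = i"
| "coord_degree (HC i) = i"

lemma i_map_interpolates:
  assumes "p \<in> loop_space K"
  obtains N B psi psib where "(B, psi, psib) \<in> Rep N K"
    "\<And>v. coord_degree v < M \<Longrightarrow> i_map K N B psi psib v = p v"
proof -
  obtain as where as: "length as = M" "\<And>j. j < M \<Longrightarrow> coeff (\<Prod>a\<leftarrow>as. [:- a, 1:]) j = p (HC (M - j))"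
    using split_monic_poly_with_lower_coeffs[where M = M and c = "\<lambda>j. p (HC (M - j))"] by blast
  define N where "N = K * M + M"
  define Bt where "Bt = shift_block_mat N K (K * M) as"
  define psi where "psi = block_column_mat N K (K * M) p"
  define psib where "psib = first_rows_mat K N"
  have "Bt \<in> carrier_mat N N" "psi \<in> carrier_mat N K" "psib \<in> carrier_mat K N"
    by (simp_all add: Bt_def psi_def psib_def)
  note Rep = Rep_from_Btilde[OF this]
  have outside: "p v = 0" if "v \<notin> coords K" for v
    using assms that by (auto simp: loop_space_def)
  have "i_map K N (Bt - psi * psib) psi psib v = p v" if "coord_degree v < M" for v
  proof (cases v)
    case (GC i a b)
    show ?thesis
    proof (cases "1 \<le> i \<and> a < K \<and> b < K")
      case True
      then have "(i - 1 + 1) * K \<le> K * M" using that GC by simp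
      then have "(psib * (((1/2) ^ (i - 1)) \<cdot>\<^sub>m (Bt ^\<^sub>m (i - 1))) * psi) $$ (a, b) = p (GC i a b)"
        using True block_column_mat_read_off[of a K b "i - 1" "K * M" N as p]
        by (simp add: Bt_def psi_def psib_def N_def)
      then show ?thesis using True GC by (simp add: i_map_def Rep(2))
    next
      case False
      then show ?thesis using GC outside[of v] by (auto simp: i_map_def coords_def)
    qed
  next
    case (HC i)
    show ?thesis
    proof (cases "i = 0")
      case True
      then show ?thesis using HC outside[of v] by (auto simp: i_map_def coords_def)
    next
      case False
      have "i < M" using that HC by simp
      have "coeff (char_poly Bt) (N - i) = coeff (\<Prod>a\<leftarrow>as. [:- a, 1:]) (M - i)"
        using \<open>i < M\<close> as(1)
        by (simp add: Bt_def char_poly_shift_block_mat N_def coeff_monom_mult)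
      also have "\<dots> = p (HC i)" using as(2)[of "M - i"] \<open>i < M\<close> False by simp
      finally show ?thesis using HC False \<open>i < M\<close> by (simp add: i_map_def Rep(2) N_def)
    qed
  qed
  with Rep(1) show ?thesis using that by blast
qed

lemma i_map_in_loop_space: "i_map K N B psi psib \<in> loop_space K"
proof -
  have "i_map K N B psi psib v = 0" if "v \<notin> coords K" for v
    using that by (cases v) (auto simp: i_map_def coords_def)
  then show ?thesis by (simp add: loop_space_def)
qed

theorem mainTheorem5:
  fixes K :: nat
  shows "zariski_dense K (\<Union>N. (\<lambda>(B, psi, psib). i_map K N B psi psib) ` Rep N K)"
proof (rule zariski_dense_if_interpolating)
  show "(\<Union>N. (\<lambda>(B, psi, psib). i_map K N B psi psib) ` Rep N K) \<subseteq> loop_space K"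
    using i_map_in_loop_space by auto
next
  fix F :: "coord set" and p
  assume "finite F" "p \<in> loop_space K"
  obtain M where "coord_degree ` F \<subseteq> {..<M}"
    using finite_nat_bounded[OF finite_imageI[OF \<open>finite F\<close>]] by blast
  then obtain N B psi psib where "(B, psi, psib) \<in> Rep N K" "\<forall>v\<in>F. i_map K N B psi psib v = p v"
    using i_map_interpolates[OF \<open>p \<in> loop_space K\<close>, of M] by (metis image_subset_iff lessThan_iff)
  then show "\<exists>q\<in>(\<Union>N. (\<lambda>(B, psi, psib). i_map K N B psi psib) ` Rep N K). \<forall>v\<in>F. q v = p v"
    by force
qed

end
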